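(* Let $N$ be a non-abelian Iwasawa N-group of a real simple Lie group of real rank one; thus $N$ is a $(2n+1)$-dimensional Heisenberg group, a $(4n+3)$-dimensional quaternionic Heisenberg group, or the $15$-dimensional octonionic Heisenberg group. Let $Z(N)$ be the center of $N$ and let $F:N\to N$ be an abstract (not necessarily continuous) group homomorphism. Assume either (1) $N$ is a $(2n+1)$-dimensional Heisenberg group and $F(z)\neq e$ for some $z\in Z(N)$, or (2) $N$ is quaternionic or octonionic and $F|_{Z(N)}$ is injective. Then $F$ is a group automorphism, and there exist a central automorphism $\mu$ and a Lie group automorphism $\overline{F}$ of $N$ with $F=\mu\circ\overline{F}$. Furthermore, $F|_{Z(N)}:Z(N)\to Z(N)$ and the induced map $N/Z(N)\to N/Z(N)$ are both diffeomorphisms.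
   Context: For a real simple Lie group $G=KAN$ (Iwasawa decomposition), $N$ is its Iwasawa N-group. The $(2n+1)$-dimensional Heisenberg group is the simply connected Lie group with Lie algebra spanned by $X_1,Y_1,\dots,X_n,Y_n,Z$ with $[X_t,Y_t]=Z$ and all other brackets zero. The $(4n+3)$-dimensional quaternionic Heisenberg group is the simply connected Lie group with Lie algebra spanned by $X_t,Y_t,V_t,W_t$ ($t=1..n$), $Z_1,Z_2,Z_3$ with nonzero brackets $[X_t,Y_t]=Z_1$, $[X_t,V_t]=Z_2$, $[X_t,W_t]=Z_3$, $[Y_t,V_t]=Z_3$, $[Y_t,W_t]=-Z_2$, $[V_t,W_t]=Z_1$ (and antisymmetric counterparts). The $15$-dimensional octonionic Heisenberg group is the Iwasawa N-group of the rank one real form $F_{4(-20)}$ (2-step nilpotent with 7-dimensional center). A central automorphism of $N$ is a group automorphism $\mu$ with $x^{-1}\mu(x)\in Z(N)$ for all $x$; a Lie group automorphism is a continuous automorphism. *)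

theory Defs
  imports "HOL-Analysis.Analysis"
begin

text \<open>A 2-step nilpotent Lie algebra V + Z with bracket [v,w] = omega v w (in Z, Z central)
  gives the simply connected group on V x Z with the BCH product
  (v,z)(v',z') = (v+v', z+z'+ 1/2 omega v v').\<close>

definition nmul :: "('v::real_vector \<Rightarrow> 'v \<Rightarrow> 'z::real_vector) \<Rightarrow> 'v \<times> 'z \<Rightarrow> 'v \<times> 'z \<Rightarrow> 'v \<times> 'z" where
  "nmul \<omega> a b = (fst a + fst b, snd a + snd b + (1/2) *\<^sub>R \<omega> (fst a) (fst b))"

definition nunit :: "'v::real_vector \<times> 'z::real_vector" where
  "nunit = (0, 0)"

text \<open>Inverse (valid since omega is skew-symmetric).\<close>
definition ninv :: "'v::real_vector \<times> 'z::real_vector \<Rightarrow> 'v \<times> 'z" where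
  "ninv a = (- fst a, - snd a)"

definition ncenter :: "('v::real_vector \<Rightarrow> 'v \<Rightarrow> 'z::real_vector) \<Rightarrow> ('v \<times> 'z) set" where
  "ncenter \<omega> = {c. \<forall>x. nmul \<omega> c x = nmul \<omega> x c}"

definition nhom :: "('v::real_vector \<Rightarrow> 'v \<Rightarrow> 'z::real_vector) \<Rightarrow> ('v \<times> 'z \<Rightarrow> 'v \<times> 'z) \<Rightarrow> bool" where
  "nhom \<omega> F = (\<forall>a b. F (nmul \<omega> a b) = nmul \<omega> (F a) (F b))"

definition naut :: "('v::real_vector \<Rightarrow> 'v \<Rightarrow> 'z::real_vector) \<Rightarrow> ('v \<times> 'z \<Rightarrow> 'v \<times> 'z) \<Rightarrow> bool" where
  "naut \<omega> F = (nhom \<omega> F \<and> bij F)"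

definition central_aut :: "('v::real_vector \<Rightarrow> 'v \<Rightarrow> 'z::real_vector) \<Rightarrow> ('v \<times> 'z \<Rightarrow> 'v \<times> 'z) \<Rightarrow> bool" where
  "central_aut \<omega> \<mu> = (naut \<omega> \<mu> \<and> (\<forall>x. nmul \<omega> (ninv x) (\<mu> x) \<in> ncenter \<omega>))"

text \<open>Lie group automorphism = continuous automorphism.\<close>
definition lie_aut :: "('v::real_normed_vector \<Rightarrow> 'v \<Rightarrow> 'z::real_normed_vector) \<Rightarrow> ('v \<times> 'z \<Rightarrow> 'v \<times> 'z) \<Rightarrow> bool" where
  "lie_aut \<omega> F = (naut \<omega> F \<and> continuous_on UNIV F)"

fun Ck :: "nat \<Rightarrow> ('a::euclidean_space \<Rightarrow> 'b::euclidean_space) \<Rightarrow> bool" where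
  "Ck 0 f = continuous_on UNIV f"
| "Ck (Suc k) f = ((\<forall>x. f differentiable (at x)) \<and>
                    (\<forall>v. Ck k (\<lambda>x. frechet_derivative f (at x) v)))"

definition smooth :: "('a::euclidean_space \<Rightarrow> 'b::euclidean_space) \<Rightarrow> bool" where
  "smooth f = (\<forall>k. Ck k f)"

definition diffeo :: "('a::euclidean_space \<Rightarrow> 'a) \<Rightarrow> bool" where
  "diffeo f = (bij f \<and> smooth f \<and> smooth (inv f))"

text \<open>N/Z(N) is identified (as a manifold) with V via the projection fst, and
  Z(N) = {0} x Z with Z via snd.\<close>
definition cor_concl :: "('v::euclidean_space \<Rightarrow> 'v \<Rightarrow> 'z::euclidean_space) \<Rightarrow> ('v \<times> 'z \<Rightarrow> 'v \<times> 'z) \<Rightarrow> bool" where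
  "cor_concl \<omega> F =
    (naut \<omega> F \<and>
     (\<exists>\<mu> Fbar. central_aut \<omega> \<mu> \<and> lie_aut \<omega> Fbar \<and> F = \<mu> \<circ> Fbar) \<and>
     bij_betw F (ncenter \<omega>) (ncenter \<omega>) \<and>
     (\<exists>h. diffeo h \<and> (\<forall>x\<in>ncenter \<omega>. snd (F x) = h (snd x))) \<and>
     (\<exists>g. diffeo g \<and> (\<forall>x. fst (F x) = g (fst x))))"

text \<open>(2n+1)-dim Heisenberg: V = (x,y) in R^n x R^n, [X_t,Y_t]=Z.\<close>
definition heis_form :: "((real^'n) \<times> (real^'n)) \<Rightarrow> ((real^'n) \<times> (real^'n)) \<Rightarrow> real" where
  "heis_form a b = fst a \<bullet> snd b - snd a \<bullet> fst b"

text \<open>(4n+3)-dim quaternionic Heisenberg: V = (x,y,v,w), Z = (Z1,Z2,Z3).\<close>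
definition quat_form ::
  "((real^'n) \<times> (real^'n) \<times> (real^'n) \<times> (real^'n)) \<Rightarrow> ((real^'n) \<times> (real^'n) \<times> (real^'n) \<times> (real^'n))
     \<Rightarrow> real \<times> real \<times> real" where
  "quat_form a b = (case a of (x,y,v,w) \<Rightarrow> case b of (x',y',v',w') \<Rightarrow>
     ((x \<bullet> y' - y \<bullet> x') + (v \<bullet> w' - w \<bullet> v'),
      (x \<bullet> v' - v \<bullet> x') - (y \<bullet> w' - w \<bullet> y'),
      (x \<bullet> w' - w \<bullet> x') + (y \<bullet> v' - v \<bullet> y')))"

text \<open>15-dim octonionic Heisenberg (Iwasawa N of F4(-20)): V = O = R x R^7,
  Z = Im O = R^7, bracket [a,b] = Im(conj a * b), with the octonion product
  e_i e_(i+1) = e_(i+3) (indices mod 7).\<close>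
definition oct_form :: "(real \<times> (real^7)) \<Rightarrow> (real \<times> (real^7)) \<Rightarrow> (real^7)" where
  "oct_form a b = (\<chi> k.
     fst a * (snd b $ k) - (snd a $ k) * fst b
     - ((snd a $ (k-3)) * (snd b $ (k-2)) - (snd a $ (k-2)) * (snd b $ (k-3)))
     - ((snd a $ (k+1)) * (snd b $ (k+3)) - (snd a $ (k+3)) * (snd b $ (k+1)))
     - ((snd a $ (k+2)) * (snd b $ (k-1)) - (snd a $ (k-1)) * (snd b $ (k+2))))"

end

theory Submission
  imports Defs
begin

text \<open>
  In all three families
  every nonzero ad v = \<omega> v maps V onto Z, so Z(N) = 0 \<times> Z and every central element is a
  commutator. An abstract homomorphism F therefore preserves commutators and the center, and has the
  form F (v, z) = (f v, s v + \<phi> z) with f, \<phi> additive and \<phi> (\<omega> a b) = \<omega> (f a) (f b).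

  In the standard bases the structure constants lie in {0, \<plusminus>basis}, so the linear extensions
  M, L of f, \<phi> from the bases satisfy the same identity; they are bijective as soon as \<phi> does not
  vanish on a basis vector. After normalising by M\<inverse> and L\<inverse>, f maps each coordinate line to
  itself, and the induced scalings form one ring endomorphism of \<real>, which must be the identity.
  Hence f = M and \<phi> = L are linear, F = \<mu> \<circ> (f \<times> \<phi>) with the shear
  \<mu> (v, z) = (v, z + s (f\<inverse> v)), and all conclusions follow. For the Heisenberg group,
  F z \<noteq> e for one central z reaches the normalised situation after a dilation of V.
\<close>

lemma real_ring_endomorphism_eq_id:
  fixes c :: "real \<Rightarrow> real"
  assumes add: "\<And>x y. c (x + y) = c x + c y" and mult: "\<And>x y. c (x * y) = c x * c y" and one: "c 1 = 1"
  shows "c x = x"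
proof -
  interpret Modules.additive c by unfold_locales (fact add)
  have of_nat: "c (of_nat n) = of_nat n" for n
    by (induction n) (simp_all add: zero one add)
  have of_int: "c (of_int m) = of_int m" for m
    by (cases m rule: int_cases2) (simp_all add: of_nat minus)
  have rat: "c q = q" if "q \<in> \<rat>" for q
  proof -
    from that obtain a b where b: "b > 0" and q: "q = of_int a / of_int b"
      by (rule Rats_cases')
    have "c q * of_int b = c (q * of_int b)" by (simp add: mult of_int)
    also have "\<dots> = of_int a" using b q by (simp add: of_int)
    finally have "c q * of_int b = q * of_int b" using b q by simp
    then show ?thesis using b by simp
  qed
  have mono: "c y \<le> c z" if "y \<le> z" for y z
  proof -
    have "c (z - y) = c (sqrt (z - y)) * c (sqrt (z - y))"
      using that by (simp flip: mult)
    then have "c z - c y \<ge> 0" by (simp add: diff)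
    then show ?thesis by simp
  qed
  show ?thesis
  proof (rule linorder_cases[of "c x" x])
    assume "c x < x"
    then obtain r where "r \<in> \<rat>" "c x < r" "r < x" using Rats_dense_in_real by blast
    with mono[of r x] rat show ?thesis by simp
  next
    assume "x < c x"
    then obtain r where "r \<in> \<rat>" "x < r" "r < c x" using Rats_dense_in_real by blast
    with mono[of x r] rat show ?thesis by simp
  qed
qed

lemma additive_eq_id_if_fixes_Basis_lines:
  fixes g :: "'a::euclidean_space \<Rightarrow> 'a"
  assumes add: "\<And>x y. g (x + y) = g x + g y" and lines: "\<And>t i. i \<in> Basis \<Longrightarrow> g (t *\<^sub>R i) = t *\<^sub>R i"
  shows "g = id"
proof
  interpret Modules.additive g by unfold_locales (fact add)
  fix a
  have "g a = (\<Sum>i\<in>Basis. g ((a \<bullet> i) *\<^sub>R i))"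
    by (subst euclidean_representation[symmetric, of a]) (rule sum)
  then show "g a = id a" by (simp add: lines euclidean_representation)
qed

lemma Ck_const: "Ck k (\<lambda>x::'a::euclidean_space. c::'b::euclidean_space)"
  by (induction k arbitrary: c) auto

lemma Ck_linear:
  fixes g :: "'a::euclidean_space \<Rightarrow> 'b::euclidean_space"
  assumes "linear g"
  shows "Ck k g"
proof (cases k)
  case 0
  then show ?thesis using assms by (simp add: linear_continuous_on linear_conv_bounded_linear)
next
  case (Suc m)
  have "frechet_derivative g (at x) = g" for x
    using frechet_derivative_at[OF linear_imp_has_derivative[OF assms]] by simp
  then show ?thesis using Suc assms by (simp add: Ck_const linear_imp_differentiable)
qed

lemma diffeo_linear:
  fixes g :: "'a::euclidean_space \<Rightarrow> 'a"
  assumes "linear g" "bij g"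
  shows "diffeo g"
proof -
  have "linear (inv g)" using assms inj_linear_imp_inv_linear bij_is_inj by blast
  then show ?thesis using assms by (simp add: diffeo_def smooth_def Ck_linear)
qed

section \<open>Automorphisms of 2-step nilpotent groups\<close>

lemma fst_zero_in_ncenter:
  assumes "bilinear \<omega>" "fst c = 0"
  shows "c \<in> ncenter \<omega>"
  using assms by (simp add: ncenter_def nmul_def bilinear_lzero bilinear_rzero add.commute)

definition shear :: "('v \<Rightarrow> 'z::plus) \<Rightarrow> 'v \<times> 'z \<Rightarrow> 'v \<times> 'z" where
  "shear s x = (fst x, snd x + s (fst x))"

lemma central_aut_shear:
  assumes "bilinear \<omega>" and s_add: "\<And>a b. s (a + b) = s a + s b"
  shows "central_aut \<omega> (shear s)"
proof -
  have "nhom \<omega> (shear s)"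
    by (simp add: nhom_def nmul_def shear_def s_add algebra_simps)
  moreover have "bij (shear s)"
    by (rule o_bij[of "shear (\<lambda>v. - s v)"]) (auto simp: shear_def)
  moreover have "nmul \<omega> (ninv x) (shear s x) \<in> ncenter \<omega>" for x
    using assms(1) by (intro fst_zero_in_ncenter) (simp_all add: nmul_def ninv_def shear_def)
  ultimately show ?thesis by (simp add: central_aut_def naut_def)
qed

lemma lie_aut_map_prod:
  fixes \<omega> :: "'v::euclidean_space \<Rightarrow> 'v \<Rightarrow> 'z::euclidean_space"
  assumes f: "linear f" "bij f" and \<phi>: "linear \<phi>" "bij \<phi>"
    and compat: "\<And>a b. \<phi> (\<omega> a b) = \<omega> (f a) (f b)"
  shows "lie_aut \<omega> (map_prod f \<phi>)"
proof -
  have "nhom \<omega> (map_prod f \<phi>)"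
    by (simp add: nhom_def nmul_def map_prod_def split_beta compat
        linear_add[OF f(1)] linear_add[OF \<phi>(1)] linear_scale[OF \<phi>(1)])
  moreover have "bij (map_prod f \<phi>)"
    using bij_betw_map_prod[OF f(2) \<phi>(2)] by simp
  moreover have "linear (map_prod f \<phi>)"
    unfolding linear_iff map_prod_def split_beta
    by (simp add: linear_add[OF f(1)] linear_add[OF \<phi>(1)] linear_scale[OF f(1)] linear_scale[OF \<phi>(1)])
  then have "continuous_on UNIV (map_prod f \<phi>)"
    by (simp add: linear_continuous_on linear_conv_bounded_linear)
  ultimately show ?thesis by (simp add: lie_aut_def naut_def)
qed

locale nondeg_bracket =
  fixes \<omega> :: "'v::euclidean_space \<Rightarrow> 'v \<Rightarrow> 'z::euclidean_space"
  assumes bilinear: "bilinear \<omega>"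
    and skew: "\<omega> a b = - \<omega> b a"
    and ad_surj: "a \<noteq> 0 \<Longrightarrow> \<exists>b. \<omega> a b = z"
begin

lemma bracket_zero [simp]: "\<omega> a 0 = 0" "\<omega> 0 b = 0"
  using bilinear by (simp_all add: bilinear_rzero bilinear_lzero)

lemma ncenter_eq: "ncenter \<omega> = {c. fst c = 0}"
proof (intro set_eqI iffI)
  fix c assume c: "c \<in> ncenter \<omega>"
  show "c \<in> {c. fst c = 0}"
  proof (rule ccontr)
    assume "c \<notin> {c. fst c = 0}"
    moreover obtain k :: 'z where k: "k \<in> Basis" using nonempty_Basis by blast
    ultimately obtain b where b: "\<omega> (fst c) b = k" using ad_surj by auto
    from c have "nmul \<omega> c (b, 0) = nmul \<omega> (b, 0) c" by (simp add: ncenter_def)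
    then have "\<omega> (fst c) b = \<omega> b (fst c)" by (simp add: nmul_def algebra_simps)
    then have "\<omega> (fst c) b = 0" using skew[of b "fst c"] by (simp add: eq_neg_iff_add_eq_0 flip: scaleR_2)
    then show False using b k by auto
  qed
qed (use bilinear fst_zero_in_ncenter in blast)

lemma nmul_commutator: "nmul \<omega> (a, 0) (b, 0) = nmul \<omega> (nmul \<omega> (b, 0) (a, 0)) (0, \<omega> a b)"
  using skew[of b a] by (simp add: nmul_def algebra_simps flip: scaleR_2)

end

definition quot_map :: "('v::zero \<times> 'z::zero \<Rightarrow> 'v \<times> 'z) \<Rightarrow> 'v \<Rightarrow> 'v" where
  "quot_map F v = fst (F (v, 0))"

definition center_map :: "('v::zero \<times> 'z::zero \<Rightarrow> 'v \<times> 'z) \<Rightarrow> 'z \<Rightarrow> 'z" where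
  "center_map F z = snd (F (0, z))"

definition offset_map :: "('v::zero \<times> 'z::zero \<Rightarrow> 'v \<times> 'z) \<Rightarrow> 'v \<Rightarrow> 'z" where
  "offset_map F v = snd (F (v, 0))"

locale bracket_hom = nondeg_bracket \<omega> for \<omega> :: "'v::euclidean_space \<Rightarrow> 'v \<Rightarrow> 'z::euclidean_space" +
  fixes F :: "'v \<times> 'z \<Rightarrow> 'v \<times> 'z"
  assumes hom: "nhom \<omega> F"
begin

abbreviation "f \<equiv> quot_map F"
abbreviation "\<phi> \<equiv> center_map F"
abbreviation "s \<equiv> offset_map F"

lemma F_nmul: "F (nmul \<omega> a b) = nmul \<omega> (F a) (F b)"
  using hom unfolding nhom_def by blast

lemma F_bracket: "F (0, \<omega> a b) = (0, \<omega> (f a) (f b))"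
proof -
  obtain c1 c2 where c: "F (0, \<omega> a b) = (c1, c2)" by fastforce
  have "F (nmul \<omega> (a, 0) (b, 0)) = F (nmul \<omega> (nmul \<omega> (b, 0) (a, 0)) (0, \<omega> a b))"
    by (rule arg_cong[OF nmul_commutator])
  then have "nmul \<omega> (F (a, 0)) (F (b, 0)) = nmul \<omega> (nmul \<omega> (F (b, 0)) (F (a, 0))) (c1, c2)"
    by (simp only: F_nmul c)
  then have "nmul \<omega> (f a, s a) (f b, s b) = nmul \<omega> (nmul \<omega> (f b, s b) (f a, s a)) (c1, c2)"
    by (simp add: quot_map_def offset_map_def)
  then have "c1 = 0" and "c2 = (1/2) *\<^sub>R \<omega> (f a) (f b) - (1/2) *\<^sub>R \<omega> (f b) (f a)"
    by (simp_all add: nmul_def algebra_simps)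
  moreover have "(1/2) *\<^sub>R \<omega> (f a) (f b) - (1/2) *\<^sub>R \<omega> (f b) (f a) = \<omega> (f a) (f b)"
    using skew[of "f b" "f a"] by (simp flip: scaleR_add_left)
  ultimately show ?thesis using c by simp
qed

lemma F_center: "F (0, z) = (0, \<phi> z)"
proof -
  obtain i :: 'v where "i \<in> Basis" using nonempty_Basis by blast
  then obtain b where "\<omega> i b = z" using ad_surj nonzero_Basis by blast
  then have "fst (F (0, z)) = 0" using F_bracket by auto
  then show ?thesis by (simp add: center_map_def prod_eq_iff)
qed

lemma F_decomp: "F (v, z) = (f v, s v + \<phi> z)"
proof -
  have "(v, z) = nmul \<omega> (v, 0) (0, z)" by (simp add: nmul_def)
  then have "F (v, z) = nmul \<omega> (F (v, 0)) (F (0, z))" by (metis F_nmul)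
  then show ?thesis by (simp add: F_center nmul_def quot_map_def offset_map_def)
qed

lemma quot_map_add: "f (a + b) = f a + f b"
  using F_nmul[of "(a, 0)" "(b, 0)"] by (simp add: nmul_def F_decomp)

lemma center_map_add: "\<phi> (x + y) = \<phi> x + \<phi> y"
  using F_nmul[of "(0, x)" "(0, y)"] by (simp add: nmul_def F_center)

lemma center_map_zero [simp]: "\<phi> 0 = 0"
  using center_map_add[of 0 0] by simp

lemma center_map_bracket: "\<phi> (\<omega> a b) = \<omega> (f a) (f b)"
  using F_bracket F_center by simp

lemma offset_map_nmul:
  "s (a + b) + \<phi> ((1/2) *\<^sub>R \<omega> a b) = s a + s b + (1/2) *\<^sub>R \<omega> (f a) (f b)"
  using F_nmul[of "(a, 0)" "(b, 0)"] by (simp add: nmul_def F_decomp)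

lemma bij_betw_ncenter:
  assumes "bij \<phi>"
  shows "bij_betw F (ncenter \<omega>) (ncenter \<omega>)"
proof -
  have "bij_betw (map_prod id \<phi>) ({0} \<times> UNIV) ({0} \<times> UNIV)"
    using assms by (intro bij_betw_map_prod) simp_all
  moreover have "F x = map_prod id \<phi> x" if "x \<in> {0} \<times> UNIV" for x
    using that F_center by auto
  moreover have "ncenter \<omega> = {0} \<times> UNIV"
    by (auto simp: ncenter_eq)
  ultimately show ?thesis using bij_betw_cong by metis
qed

lemma cor_concl_if_linear_bij:
  assumes f: "linear f" "bij f" and \<phi>: "linear \<phi>" "bij \<phi>"
  shows "cor_concl \<omega> F"
proof -
  have "linear (inv f)" using f inj_linear_imp_inv_linear bij_is_inj by blast
  moreover have "s (a + b) = s a + s b" for a b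
    using offset_map_nmul[of a b] by (simp add: linear_scale[OF \<phi>(1)] center_map_bracket)
  ultimately have \<mu>: "central_aut \<omega> (shear (s \<circ> inv f))"
    by (intro central_aut_shear bilinear) (simp add: linear_add)
  have Fbar: "lie_aut \<omega> (map_prod f \<phi>)"
    using f \<phi> center_map_bracket by (rule lie_aut_map_prod)
  have F_eq: "F = shear (s \<circ> inv f) \<circ> map_prod f \<phi>"
    using bij_is_inj[OF f(2)] by (auto simp: F_decomp shear_def add.commute)
  have "bij (map_prod f \<phi>)" "bij (shear (s \<circ> inv f))"
    using \<mu> Fbar unfolding central_aut_def lie_aut_def naut_def by blast+
  then have "bij F"
    using F_eq bij_comp by metis
  show ?thesis
    unfolding cor_concl_def
  proof (intro conjI exI)
    show "naut \<omega> F" using hom \<open>bij F\<close> by (simp add: naut_def)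
    show "\<forall>x\<in>ncenter \<omega>. snd (F x) = \<phi> (snd x)" by (auto simp: ncenter_eq F_center)
    show "\<forall>x. fst (F x) = f (fst x)" by (simp add: split_paired_all F_decomp)
  qed (use \<mu> Fbar F_eq f \<phi> diffeo_linear bij_betw_ncenter in auto)
qed

end

section \<open>Additive maps compatible with a bracket\<close>

locale basis_bracket = nondeg_bracket \<omega> for \<omega> :: "'v::euclidean_space \<Rightarrow> 'v \<Rightarrow> 'z::euclidean_space" +
  assumes bracket_Basis: "i \<in> Basis \<Longrightarrow> j \<in> Basis \<Longrightarrow> \<omega> i j = 0 \<or> \<omega> i j \<in> Basis \<or> - \<omega> i j \<in> Basis"
    and Basis_onto: "\<exists>i\<in>Basis. \<forall>k\<in>Basis. \<exists>j\<in>Basis. \<omega> i j = k"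
    and Basis_centralizer:
      "i \<in> Basis \<Longrightarrow> (\<forall>j\<in>Basis. \<omega> i j = 0 \<longrightarrow> \<omega> w j = 0) \<Longrightarrow> \<exists>c. w = c *\<^sub>R i"
begin

lemma Basis_bracket_nonzero:
  assumes i: "i \<in> Basis"
  obtains j where "j \<in> Basis" "\<omega> i j \<noteq> 0"
proof (rule ccontr)
  assume "\<not> thesis"
  with that have "\<omega> i j = 0" if "j \<in> Basis" for j using that by blast
  then have "\<omega> i = (\<lambda>b. 0)"
    using bilinear by (intro linear_eq_stdbasis) (auto simp: bilinear_def linear_zero)
  moreover obtain k :: 'z where "k \<in> Basis" using nonempty_Basis by blast
  moreover obtain b where "\<omega> i b = k" using ad_surj i nonzero_Basis by blast
  ultimately show False by auto
qed

end

locale compatible_pair = basis_bracket \<omega> for \<omega> :: "'v::euclidean_space \<Rightarrow> 'v \<Rightarrow> 'z::euclidean_space" +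
  fixes f :: "'v \<Rightarrow> 'v" and \<phi> :: "'z \<Rightarrow> 'z"
  assumes f_add: "f (a + b) = f a + f b"
    and \<phi>_add: "\<phi> (x + y) = \<phi> x + \<phi> y"
    and compat: "\<phi> (\<omega> a b) = \<omega> (f a) (f b)"
begin

sublocale \<phi>: Modules.additive \<phi> by unfold_locales (fact \<phi>_add)

lemma f_scaleR_Basis_collinear:
  assumes fixes_Basis: "\<forall>i\<in>Basis. f i = i" and i: "i \<in> Basis"
  shows "\<exists>c. f (t *\<^sub>R i) = c *\<^sub>R i"
proof (rule Basis_centralizer[OF i], intro ballI impI)
  fix j assume "j \<in> Basis" "\<omega> i j = 0"
  then have "\<omega> (f (t *\<^sub>R i)) (f j) = 0"
    using bilinear by (simp add: bilinear_lmul \<phi>.zero flip: compat)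
  then show "\<omega> (f (t *\<^sub>R i)) j = 0" using fixes_Basis \<open>j \<in> Basis\<close> by simp
qed

lemma common_Basis_scaling:
  assumes fixes_Basis: "\<forall>i\<in>Basis. f i = i"
  obtains c where "\<And>t i. i \<in> Basis \<Longrightarrow> f (t *\<^sub>R i) = c t *\<^sub>R i"
    and "\<And>t k. k \<in> Basis \<Longrightarrow> \<phi> (t *\<^sub>R k) = c t *\<^sub>R k"
proof -
  obtain i0 where i0: "i0 \<in> Basis" "\<forall>k\<in>Basis. \<exists>j\<in>Basis. \<omega> i0 j = k"
    using Basis_onto by blast
  define c where "c t = (SOME c. f (t *\<^sub>R i0) = c *\<^sub>R i0)" for t
  have f_i0: "f (t *\<^sub>R i0) = c t *\<^sub>R i0" for t
    unfolding c_def using someI_ex[OF f_scaleR_Basis_collinear[OF fixes_Basis i0(1)]] .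
  have \<phi>_line: "\<phi> (t *\<^sub>R k) = c t *\<^sub>R k" if k: "k \<in> Basis" for t k
  proof -
    obtain j where j: "j \<in> Basis" "\<omega> i0 j = k" using i0 k by blast
    then have "\<phi> (t *\<^sub>R k) = \<omega> (f (t *\<^sub>R i0)) (f j)"
      using bilinear by (simp add: bilinear_lmul flip: compat)
    also have "\<dots> = c t *\<^sub>R k"
      using f_i0 j fixes_Basis bilinear by (simp add: bilinear_lmul)
    finally show ?thesis .
  qed
  have "f (t *\<^sub>R i) = c t *\<^sub>R i" if i: "i \<in> Basis" for t i
  proof -
    obtain d where d: "f (t *\<^sub>R i) = d *\<^sub>R i" using f_scaleR_Basis_collinear[OF fixes_Basis i] by blast
    obtain j where j: "j \<in> Basis" "\<omega> i j \<noteq> 0" using Basis_bracket_nonzero[OF i] by blast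
    have "\<phi> (t *\<^sub>R \<omega> i j) = \<omega> (f (t *\<^sub>R i)) (f j)"
      using bilinear by (simp add: bilinear_lmul flip: compat)
    also have "\<dots> = d *\<^sub>R \<omega> i j"
      using d j fixes_Basis bilinear by (simp add: bilinear_lmul)
    finally have "\<phi> (t *\<^sub>R \<omega> i j) = d *\<^sub>R \<omega> i j" .
    moreover from bracket_Basis[OF i j(1)] j(2)
    consider "\<omega> i j \<in> Basis" | "- \<omega> i j \<in> Basis" by blast
    then have "\<phi> (t *\<^sub>R \<omega> i j) = c t *\<^sub>R \<omega> i j"
    proof cases
      case 2
      have "\<phi> (t *\<^sub>R \<omega> i j) = - \<phi> (t *\<^sub>R - \<omega> i j)" by (simp flip: \<phi>.minus)
      also have "\<dots> = c t *\<^sub>R \<omega> i j" using \<phi>_line[OF 2] by simp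
      finally show ?thesis .
    qed (rule \<phi>_line)
    ultimately show ?thesis using d j(2) by simp
  qed
  then show ?thesis using \<phi>_line by (rule that)
qed

lemma eq_id_if_fixes_Basis:
  assumes fixes_Basis: "\<forall>i\<in>Basis. f i = i"
  shows "f = id" and "\<phi> = id"
proof -
  obtain c where f_line: "\<And>t i. i \<in> Basis \<Longrightarrow> f (t *\<^sub>R i) = c t *\<^sub>R i"
    and \<phi>_line: "\<And>t k. k \<in> Basis \<Longrightarrow> \<phi> (t *\<^sub>R k) = c t *\<^sub>R k"
    using common_Basis_scaling[OF fixes_Basis] by blast
  obtain k0 :: 'z where k0: "k0 \<in> Basis" using nonempty_Basis by blast
  obtain i0 j0 where i0: "i0 \<in> Basis" and j0: "j0 \<in> Basis" "\<omega> i0 j0 = k0"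
    using Basis_onto k0 by blast
  have "c (x + y) = c x + c y" for x y
    using f_add[of "x *\<^sub>R i0" "y *\<^sub>R i0"] f_line[OF i0] nonzero_Basis[OF i0]
    by (simp flip: scaleR_add_left)
  moreover have "c (x * y) = c x * c y" for x y
  proof -
    have "c (x * y) *\<^sub>R k0 = \<phi> (\<omega> (x *\<^sub>R i0) (y *\<^sub>R j0))"
      using \<phi>_line[OF k0] j0 bilinear by (simp add: bilinear_lmul bilinear_rmul)
    also have "\<dots> = \<omega> (f (x *\<^sub>R i0)) (f (y *\<^sub>R j0))"
      by (rule compat)
    also have "\<dots> = (c x * c y) *\<^sub>R k0"
      using f_line i0 j0 bilinear by (simp add: bilinear_lmul bilinear_rmul)
    finally show ?thesis using nonzero_Basis[OF k0] by simp
  qed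
  moreover have "c 1 = 1"
    using f_line[OF i0, of 1] fixes_Basis i0 nonzero_Basis[OF i0] scaleR_cancel_right[of 1 i0 "c 1"]
    by simp
  ultimately have "c t = t" for t
    by (rule real_ring_endomorphism_eq_id)
  then show "f = id" and "\<phi> = id"
    using f_line \<phi>_line f_add \<phi>_add by (auto intro: additive_eq_id_if_fixes_Basis_lines)
qed

lemma linear_extensions_compat:
  assumes M: "linear M" "\<forall>i\<in>Basis. M i = f i" and L: "linear L" "\<forall>k\<in>Basis. L k = \<phi> k"
  shows "\<omega> (M a) (M b) = L (\<omega> a b)"
proof -
  have L_bracket: "\<phi> (\<omega> i j) = L (\<omega> i j)" if "i \<in> Basis" "j \<in> Basis" for i j
    using bracket_Basis[OF that] L \<phi>.zero \<phi>.minus[of "- \<omega> i j"] linear_0[OF L(1)] linear_neg[OF L(1)]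
    by (metis minus_minus)
  have "(\<lambda>a b. \<omega> (M a) (M b)) = (\<lambda>a b. L (\<omega> a b))"
  proof (rule bilinear_eq_stdbasis)
    show "bilinear (\<lambda>a b. \<omega> (M a) (M b))" "bilinear (\<lambda>a b. L (\<omega> a b))"
      using bilinear M(1) L(1) unfolding bilinear_def
      by (auto intro: linear_compose[unfolded o_def])
    show "\<omega> (M i) (M j) = L (\<omega> i j)" if "i \<in> Basis" "j \<in> Basis" for i j
      using that M(2) L_bracket by (simp flip: compat)
  qed
  then show ?thesis by metis
qed

lemma bij_linear_extensions:
  assumes nz: "\<exists>k\<in>Basis. \<phi> k \<noteq> 0"
  obtains M L where "linear M" "bij M" "\<forall>i\<in>Basis. M i = f i"
    and "linear L" "bij L" "\<forall>k\<in>Basis. L k = \<phi> k"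
    and "\<And>a b. \<omega> (M a) (M b) = L (\<omega> a b)"
proof -
  obtain M where M: "linear M" "\<forall>i\<in>Basis. M i = f i"
    using linear_independent_extend[OF independent_Basis] by blast
  obtain L where L: "linear L" "\<forall>k\<in>Basis. L k = \<phi> k"
    using linear_independent_extend[OF independent_Basis] by blast
  note bracket_compat = linear_extensions_compat[OF M L]
  obtain k0 where k0: "k0 \<in> Basis" "\<phi> k0 \<noteq> 0" using nz by blast
  have "inj M"
    unfolding linear_injective_0[OF M(1)]
  proof (intro allI impI, rule ccontr)
    fix a assume "M a = 0" "a \<noteq> 0"
    then obtain b where "\<omega> a b = k0" using ad_surj by blast
    then have "\<phi> k0 = \<omega> (M a) (M b)" using bracket_compat L(2) k0(1) by simp
    then show False using \<open>M a = 0\<close> k0(2) by simp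
  qed
  then have "surj M" using linear_inj_imp_surj[OF M(1)] by blast
  have "z \<in> range L" for z
  proof -
    obtain i :: 'v where "i \<in> Basis" using nonempty_Basis by blast
    then obtain b where "\<omega> i b = z" using ad_surj nonzero_Basis by blast
    with \<open>surj M\<close> have "z = L (\<omega> (inv M i) (inv M b))"
      by (metis bracket_compat surj_f_inv_f)
    then show ?thesis by blast
  qed
  then have "surj L" by blast
  then have "inj L" using linear_surj_imp_inj[OF L(1)] by blast
  show ?thesis
    using that M L bracket_compat \<open>inj M\<close> \<open>surj M\<close> \<open>inj L\<close> \<open>surj L\<close> by (simp add: bij_def)
qed

lemma linear_bij_if_nonzero_on_Basis:
  assumes "\<exists>k\<in>Basis. \<phi> k \<noteq> 0"
  shows "linear f \<and> bij f \<and> linear \<phi> \<and> bij \<phi>"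
proof -
  obtain M L where M: "linear M" "bij M" "\<forall>i\<in>Basis. M i = f i"
    and L: "linear L" "bij L" "\<forall>k\<in>Basis. L k = \<phi> k"
    and bracket_compat: "\<And>a b. \<omega> (M a) (M b) = L (\<omega> a b)"
    using bij_linear_extensions[OF assms] by blast
  have M_inv: "linear (inv M)" "M (inv M v) = v" "inv M (M v) = v" for v
    using M(1,2) by (auto simp: inj_linear_imp_inv_linear bij_is_inj bij_inv_eq_iff bij_is_surj surj_f_inv_f)
  have L_inv: "linear (inv L)" "L (inv L z) = z" "inv L (L z) = z" for z
    using L(1,2) by (auto simp: inj_linear_imp_inv_linear bij_is_inj bij_inv_eq_iff bij_is_surj surj_f_inv_f)
  interpret normalized: compatible_pair \<omega> "inv M \<circ> f" "inv L \<circ> \<phi>"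
  proof unfold_locales
    show "(inv M \<circ> f) (a + b) = (inv M \<circ> f) a + (inv M \<circ> f) b" for a b
      using M_inv(1) by (simp add: f_add linear_add)
    show "(inv L \<circ> \<phi>) (x + y) = (inv L \<circ> \<phi>) x + (inv L \<circ> \<phi>) y" for x y
      using L_inv(1) by (simp add: \<phi>_add linear_add)
    show "(inv L \<circ> \<phi>) (\<omega> a b) = \<omega> ((inv M \<circ> f) a) ((inv M \<circ> f) b)" for a b
      using bracket_compat[of "inv M (f a)" "inv M (f b)"] by (simp add: compat M_inv L_inv)
  qed
  have "\<forall>i\<in>Basis. (inv M \<circ> f) i = i"
    using M_inv(3) by (simp add: M(3)[rule_format, symmetric])
  note normalized.eq_id_if_fixes_Basis[OF this]
  moreover have "f = M \<circ> (inv M \<circ> f)" "\<phi> = L \<circ> (inv L \<circ> \<phi>)"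
    using M_inv(2) L_inv(2) by (simp_all add: fun_eq_iff)
  ultimately have "f = M" "\<phi> = L"
    by simp_all
  then show ?thesis using M L by simp
qed

end

lemma (in basis_bracket) cor_concl_if_inj_on_ncenter:
  assumes hom: "nhom \<omega> F" and inj: "inj_on F (ncenter \<omega>)"
  shows "cor_concl \<omega> F"
proof -
  interpret bracket_hom \<omega> F by unfold_locales (fact hom)
  interpret compatible_pair \<omega> f \<phi>
    by unfold_locales (simp_all add: quot_map_add center_map_add center_map_bracket)
  obtain k :: 'z where k: "k \<in> Basis" using nonempty_Basis by blast
  have "(0, k) \<in> ncenter \<omega>" "(0, 0) \<in> ncenter \<omega>" by (simp_all add: ncenter_eq)
  then have "F (0, k) \<noteq> F (0, 0)" using inj k inj_onD by fastforce
  then have "\<phi> k \<noteq> 0" by (simp add: F_center)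
  then have "linear f \<and> bij f \<and> linear \<phi> \<and> bij \<phi>"
    using k by (intro linear_bij_if_nonzero_on_Basis) blast
  then show ?thesis by (intro cor_concl_if_linear_bij) simp_all
qed

section \<open>The Heisenberg group\<close>

lemma Basis_prod_vec_cases:
  assumes "(i :: (real^'m) \<times> 'b::euclidean_space) \<in> Basis"
  obtains k where "i = (axis k 1, 0)" | b where "b \<in> Basis" "i = (0, b)"
  using assms by (auto simp: Basis_prod_def dest!: axis_inverse)

lemma heis_form_axis [simp]:
  "heis_form (x, y) (axis l 1, 0) = - y $ l"
  "heis_form (x, y) (0, axis l 1) = x $ l"
  by (simp_all add: heis_form_def inner_axis)

lemma heis_basis_cases:
  assumes "(i :: (real^'n) \<times> (real^'n)) \<in> Basis"
  obtains k where "i = (axis k 1, 0)" | k where "i = (0, axis k 1)"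
  using assms by (auto elim!: Basis_prod_vec_cases dest!: axis_inverse simp: Basis_vec_def)

lemma heis_in_Basis [simp]:
  "(axis k 1, 0) \<in> (Basis :: ((real^'n) \<times> (real^'n)) set)"
  "(0, axis k 1) \<in> (Basis :: ((real^'n) \<times> (real^'n)) set)"
  by (auto simp: Basis_prod_def)

lemma heis_bilinear: "bilinear heis_form"
  unfolding bilinear_def heis_form_def
  by (auto simp: linear_iff inner_add_left inner_add_right algebra_simps)

lemma heis_skew: "heis_form a b = - heis_form b a"
  by (simp add: heis_form_def inner_commute)

lemma heis_ad_surj:
  assumes "a \<noteq> 0"
  shows "\<exists>b. heis_form a b = z"
proof -
  obtain x y where a: "a = (x, y)" by fastforce
  have N: "x \<bullet> x + y \<bullet> y \<noteq> 0"
    using assms by (simp add: a add_nonneg_eq_0_iff zero_prod_def)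
  have "heis_form a (c *\<^sub>R (- y, x)) = c * (x \<bullet> x + y \<bullet> y)" for c
    by (simp add: heis_form_def a inner_commute algebra_simps)
  then have "heis_form a ((z / (x \<bullet> x + y \<bullet> y)) *\<^sub>R (- y, x)) = z"
    using N by simp
  then show ?thesis by blast
qed

lemma heis_bracket_Basis:
  assumes "(i :: (real^'n) \<times> (real^'n)) \<in> Basis" "j \<in> Basis"
  shows "heis_form i j = 0 \<or> heis_form i j \<in> Basis \<or> - heis_form i j \<in> Basis"
  using assms by (auto elim!: heis_basis_cases) (auto simp: axis_def split: if_split_asm)

lemma heis_Basis_onto:
  "\<exists>i\<in>Basis. \<forall>k\<in>Basis. \<exists>j\<in>(Basis :: ((real^'n) \<times> (real^'n)) set). heis_form i j = k"
  using heis_in_Basis by (metis heis_form_axis(2) axis_nth Basis_real_def singletonD)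

lemma heis_Basis_centralizer:
  assumes i: "(i :: (real^'n) \<times> (real^'n)) \<in> Basis"
    and w: "\<forall>j\<in>Basis. heis_form i j = 0 \<longrightarrow> heis_form w j = 0"
  shows "\<exists>c. w = c *\<^sub>R i"
proof -
  obtain x y where xy: "w = (x, y)" by fastforce
  note w_axis = w[rule_format, OF heis_in_Basis(1)] w[rule_format, OF heis_in_Basis(2)]
  from i show ?thesis
  proof (cases rule: heis_basis_cases)
    case (1 k)
    have "y $ l = 0" "l \<noteq> k \<longrightarrow> x $ l = 0" for l
      using w_axis[of l] by (auto simp: 1 xy) (simp_all add: axis_def)
    then have "w = (x $ k) *\<^sub>R i" by (auto simp: 1 xy vec_eq_iff axis_def)
    then show ?thesis by blast
  next
    case (2 k)
    have "x $ l = 0" "l \<noteq> k \<longrightarrow> y $ l = 0" for l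
      using w_axis[of l] by (auto simp: 2 xy) (simp_all add: axis_def)
    then have "w = (y $ k) *\<^sub>R i" by (auto simp: 2 xy vec_eq_iff axis_def)
    then show ?thesis by blast
  qed
qed

lemma basis_bracket_heis: "basis_bracket heis_form"
  by unfold_locales
    (fact heis_bilinear heis_skew heis_ad_surj heis_bracket_Basis heis_Basis_onto heis_Basis_centralizer)+

lemma heis_cor_concl_if_nontrivial_on_center:
  fixes F :: "((real^'n) \<times> (real^'n)) \<times> real \<Rightarrow> ((real^'n) \<times> (real^'n)) \<times> real"
  assumes hom: "nhom heis_form F" and nontrivial: "\<exists>z\<in>ncenter heis_form. F z \<noteq> nunit"
  shows "cor_concl heis_form F"
proof -
  interpret basis_bracket heis_form by (fact basis_bracket_heis)
  interpret bracket_hom heis_form F by unfold_locales (fact hom)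
  obtain t where "\<phi> t \<noteq> 0"
    using nontrivial by (auto simp: ncenter_eq F_center nunit_def)
  then have "t \<noteq> 0" by auto
  txt \<open>The dilation D multiplies the bracket by t, which moves \<open>\<phi> t \<noteq> 0\<close> to the basis vector 1.\<close>
  define D :: "(real^'n) \<times> (real^'n) \<Rightarrow> (real^'n) \<times> (real^'n)" where
    "D v = (t *\<^sub>R fst v, snd v)" for v
  have D: "linear D" "bij D" "heis_form (D a) (D b) = t * heis_form a b" for a b
  proof -
    show "linear D" by (simp add: linear_iff D_def scaleR_add_right)
    show "bij D"
      by (rule o_bij[of "\<lambda>v. ((1/t) *\<^sub>R fst v, snd v)"]) (auto simp: D_def \<open>t \<noteq> 0\<close>)
    show "heis_form (D a) (D b) = t * heis_form a b"
      by (simp add: D_def heis_form_def algebra_simps)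
  qed
  interpret dilated: compatible_pair heis_form "f \<circ> D" "\<lambda>u. \<phi> (t * u)"
    by unfold_locales
      (simp_all add: quot_map_add center_map_add linear_add[OF D(1)] distrib_left D(3)
        flip: center_map_bracket)
  have "linear (f \<circ> D) \<and> bij (f \<circ> D) \<and> linear (\<lambda>u. \<phi> (t * u)) \<and> bij (\<lambda>u. \<phi> (t * u))"
    using \<open>\<phi> t \<noteq> 0\<close> by (intro dilated.linear_bij_if_nonzero_on_Basis) simp
  moreover have "f = (f \<circ> D) \<circ> inv D" "\<phi> = (\<lambda>u. \<phi> (t * u)) \<circ> (\<lambda>u. u / t)"
    using D(2) \<open>t \<noteq> 0\<close> by (auto simp: fun_eq_iff bij_is_surj surj_f_inv_f)
  moreover have "linear (inv D)" "bij (inv D)"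
    using D(1,2) by (simp_all add: inj_linear_imp_inv_linear bij_is_inj bij_imp_bij_inv)
  moreover have "linear (\<lambda>u::real. u / t)" "bij (\<lambda>u::real. u / t)"
    using \<open>t \<noteq> 0\<close> by (auto simp: linear_iff add_divide_distrib intro!: o_bij[of "(*) t"])
  ultimately show ?thesis
    by (intro cor_concl_if_linear_bij) (metis linear_compose bij_comp)+
qed

section \<open>The quaternionic Heisenberg group\<close>

lemma quat_form_tuple:
  "quat_form (x, y, v, u) (x', y', v', u') =
     ((x \<bullet> y' - y \<bullet> x') + (v \<bullet> u' - u \<bullet> v'),
      (x \<bullet> v' - v \<bullet> x') - (y \<bullet> u' - u \<bullet> y'),
      (x \<bullet> u' - u \<bullet> x') + (y \<bullet> v' - v \<bullet> y'))"
  by (simp add: quat_form_def)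

lemma quat_form_axis [simp]:
  fixes x y v u :: "real^'m"
  shows "quat_form (x, y, v, u) (axis l 1, 0, 0, 0) = (- y $ l, - v $ l, - u $ l)"
    and "quat_form (x, y, v, u) (0, axis l 1, 0, 0) = (x $ l, u $ l, - v $ l)"
    and "quat_form (x, y, v, u) (0, 0, axis l 1, 0) = (- u $ l, x $ l, y $ l)"
    and "quat_form (x, y, v, u) (0, 0, 0, axis l 1) = (v $ l, - y $ l, x $ l)"
  by (simp_all add: quat_form_tuple inner_axis)

lemma quat_basis_cases:
  assumes "(i :: (real^'m) \<times> (real^'m) \<times> (real^'m) \<times> (real^'m)) \<in> Basis"
  obtains k where "i = (axis k 1, 0, 0, 0)" | k where "i = (0, axis k 1, 0, 0)"
    | k where "i = (0, 0, axis k 1, 0)" | k where "i = (0, 0, 0, axis k 1)"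
  using assms by (auto elim!: Basis_prod_vec_cases dest!: axis_inverse simp: zero_prod_def)

lemma quat_in_Basis [simp]:
  "(axis k 1, 0, 0, 0) \<in> (Basis :: ((real^'m) \<times> (real^'m) \<times> (real^'m) \<times> (real^'m)) set)"
  "(0, axis k 1, 0, 0) \<in> (Basis :: ((real^'m) \<times> (real^'m) \<times> (real^'m) \<times> (real^'m)) set)"
  "(0, 0, axis k 1, 0) \<in> (Basis :: ((real^'m) \<times> (real^'m) \<times> (real^'m) \<times> (real^'m)) set)"
  "(0, 0, 0, axis k 1) \<in> (Basis :: ((real^'m) \<times> (real^'m) \<times> (real^'m) \<times> (real^'m)) set)"
  by (auto simp: Basis_prod_def zero_prod_def)

lemma Basis_real3: "(k :: real \<times> real \<times> real) \<in> Basis \<longleftrightarrow> k = (1, 0, 0) \<or> k = (0, 1, 0) \<or> k = (0, 0, 1)"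
  by (auto simp: Basis_prod_def zero_prod_def)

lemma quat_bilinear: "bilinear quat_form"
  unfolding bilinear_def linear_iff
  by (auto simp: split_paired_all quat_form_tuple inner_add_left inner_add_right algebra_simps)

lemma quat_skew: "quat_form a b = - quat_form b a"
  by (cases a; cases b) (simp add: quat_form_tuple inner_commute)

lemma quat_ad_surj:
  fixes a :: "(real^'m) \<times> (real^'m) \<times> (real^'m) \<times> (real^'m)"
  assumes "a \<noteq> 0"
  shows "\<exists>b. quat_form a b = z"
proof -
  obtain x y v u where a: "a = (x, y, v, u)" by (cases a) auto
  obtain z1 z2 z3 where z: "z = (z1, z2, z3)" by (cases z) auto
  define N where "N = x \<bullet> x + y \<bullet> y + v \<bullet> v + u \<bullet> u"
  have "N \<noteq> 0" using assms by (simp add: N_def a add_nonneg_eq_0_iff zero_prod_def)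
  define b where "b c1 c2 c3 = (- c1 *\<^sub>R y - c2 *\<^sub>R v - c3 *\<^sub>R u, c1 *\<^sub>R x + c2 *\<^sub>R u - c3 *\<^sub>R v,
    - c1 *\<^sub>R u + c2 *\<^sub>R x + c3 *\<^sub>R y, c1 *\<^sub>R v - c2 *\<^sub>R y + c3 *\<^sub>R x)" for c1 c2 c3
  have "quat_form a (b c1 c2 c3) = (c1 * N, c2 * N, c3 * N)" for c1 c2 c3
    by (simp add: a b_def quat_form_tuple N_def inner_add_right inner_diff_right inner_commute
        algebra_simps)
  then have "quat_form a (b (z1 / N) (z2 / N) (z3 / N)) = z" using \<open>N \<noteq> 0\<close> by (simp add: z)
  then show ?thesis by blast
qed

lemma quat_bracket_Basis:
  assumes "(i :: (real^'m) \<times> (real^'m) \<times> (real^'m) \<times> (real^'m)) \<in> Basis" "j \<in> Basis"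
  shows "quat_form i j = 0 \<or> quat_form i j \<in> Basis \<or> - quat_form i j \<in> Basis"
  using assms by (auto elim!: quat_basis_cases)
    (auto simp: axis_def Basis_real3 zero_prod_def split: if_split_asm)

lemma quat_Basis_onto:
  "\<exists>i\<in>Basis. \<forall>k\<in>Basis. \<exists>j\<in>(Basis :: ((real^'m) \<times> (real^'m) \<times> (real^'m) \<times> (real^'m)) set).
     quat_form i j = k"
proof -
  have "quat_form (axis k 1, 0, 0, 0) (0, axis k 1, 0, 0) = (1, 0, 0)"
    "quat_form (axis k 1, 0, 0, 0) (0, 0, axis k 1, 0) = (0, 1, 0)"
    "quat_form (axis k 1, 0, 0, 0) (0, 0, 0, axis k 1) = (0, 0, 1)" for k :: 'm
    by simp_all
  then show ?thesis using quat_in_Basis by (metis Basis_real3)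
qed

lemma quat_Basis_centralizer:
  assumes i: "(i :: (real^'m) \<times> (real^'m) \<times> (real^'m) \<times> (real^'m)) \<in> Basis"
    and w: "\<forall>j\<in>Basis. quat_form i j = 0 \<longrightarrow> quat_form w j = 0"
  shows "\<exists>c. w = c *\<^sub>R i"
proof -
  obtain x y v u where xyvu: "w = (x, y, v, u)" by (cases w) auto
  note w_axis = w[rule_format, OF quat_in_Basis(1)] w[rule_format, OF quat_in_Basis(2)]
    w[rule_format, OF quat_in_Basis(3)] w[rule_format, OF quat_in_Basis(4)]
  from i show ?thesis
  proof (cases rule: quat_basis_cases)
    case (1 k)
    have "y $ l = 0 \<and> v $ l = 0 \<and> u $ l = 0" "l \<noteq> k \<longrightarrow> x $ l = 0" for l
      using w_axis[of l] by (auto simp: 1 xyvu zero_prod_def) (simp_all add: axis_def)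
    then have "w = (x $ k) *\<^sub>R i" by (auto simp: 1 xyvu vec_eq_iff axis_def)
    then show ?thesis by blast
  next
    case (2 k)
    have "x $ l = 0 \<and> v $ l = 0 \<and> u $ l = 0" "l \<noteq> k \<longrightarrow> y $ l = 0" for l
      using w_axis[of l] by (auto simp: 2 xyvu zero_prod_def) (simp_all add: axis_def)
    then have "w = (y $ k) *\<^sub>R i" by (auto simp: 2 xyvu vec_eq_iff axis_def)
    then show ?thesis by blast
  next
    case (3 k)
    have "x $ l = 0 \<and> y $ l = 0 \<and> u $ l = 0" "l \<noteq> k \<longrightarrow> v $ l = 0" for l
      using w_axis[of l] by (auto simp: 3 xyvu zero_prod_def) (simp_all add: axis_def)
    then have "w = (v $ k) *\<^sub>R i" by (auto simp: 3 xyvu vec_eq_iff axis_def)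
    then show ?thesis by blast
  next
    case (4 k)
    have "x $ l = 0 \<and> y $ l = 0 \<and> v $ l = 0" "l \<noteq> k \<longrightarrow> u $ l = 0" for l
      using w_axis[of l] by (auto simp: 4 xyvu zero_prod_def) (simp_all add: axis_def)
    then have "w = (u $ k) *\<^sub>R i" by (auto simp: 4 xyvu vec_eq_iff axis_def)
    then show ?thesis by blast
  qed
qed

lemma basis_bracket_quat: "basis_bracket quat_form"
  by unfold_locales
    (fact quat_bilinear quat_skew quat_ad_surj quat_bracket_Basis quat_Basis_onto quat_Basis_centralizer)+

section \<open>The octonionic Heisenberg group\<close>

lemma exhaust_7:
  fixes x :: 7
  shows "x = 0 \<or> x = 1 \<or> x = 2 \<or> x = 3 \<or> x = 4 \<or> x = 5 \<or> x = 6"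
proof (induct x)
  case (of_int z)
  then have "z = 0 \<or> z = 1 \<or> z = 2 \<or> z = 3 \<or> z = 4 \<or> z = 5 \<or> z = 6" by fastforce
  then show ?case by (elim disjE) simp_all
qed

lemma forall_7: "(\<forall>i::7. P i) \<longleftrightarrow> P 0 \<and> P 1 \<and> P 2 \<and> P 3 \<and> P 4 \<and> P 5 \<and> P 6"
  by (metis exhaust_7)

lemma sum_7: "(\<Sum>i\<in>UNIV. f i) = f (0::7) + f 1 + f 2 + f 3 + f 4 + f 5 + f 6"
proof -
  have UNIV_7: "(UNIV :: 7 set) = {0, 1, 2, 3, 4, 5, 6}" using exhaust_7 by auto
  show ?thesis unfolding UNIV_7 by (simp add: add.assoc)
qed

lemma mod_7_numerals:
  "(-1::7) = 6" "(-2::7) = 5" "(-3::7) = 4" "(-4::7) = 3" "(-5::7) = 2" "(-6::7) = 1"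
  "(7::7) = 0" "(8::7) = 1" "(9::7) = 2" "(10::7) = 3" "(11::7) = 4" "(12::7) = 5"
  by simp_all

lemma oct_form_nth: "oct_form a b $ k =
     fst a * (snd b $ k) - (snd a $ k) * fst b
     - ((snd a $ (k-3)) * (snd b $ (k-2)) - (snd a $ (k-2)) * (snd b $ (k-3)))
     - ((snd a $ (k+1)) * (snd b $ (k+3)) - (snd a $ (k+3)) * (snd b $ (k+1)))
     - ((snd a $ (k+2)) * (snd b $ (k-1)) - (snd a $ (k-1)) * (snd b $ (k+2)))"
  by (simp add: oct_form_def)

lemma oct_imag_table:
  "oct_form (0, axis 0 1) (0, axis 0 1) = 0"
  "oct_form (0, axis 0 1) (0, axis 1 1) = - axis 3 1"
  "oct_form (0, axis 0 1) (0, axis 2 1) = - axis 6 1"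
  "oct_form (0, axis 0 1) (0, axis 3 1) = axis 1 1"
  "oct_form (0, axis 0 1) (0, axis 4 1) = - axis 5 1"
  "oct_form (0, axis 0 1) (0, axis 5 1) = axis 4 1"
  "oct_form (0, axis 0 1) (0, axis 6 1) = axis 2 1"
  "oct_form (0, axis 1 1) (0, axis 0 1) = axis 3 1"
  "oct_form (0, axis 1 1) (0, axis 1 1) = 0"
  "oct_form (0, axis 1 1) (0, axis 2 1) = - axis 4 1"
  "oct_form (0, axis 1 1) (0, axis 3 1) = - axis 0 1"
  "oct_form (0, axis 1 1) (0, axis 4 1) = axis 2 1"
  "oct_form (0, axis 1 1) (0, axis 5 1) = - axis 6 1"
  "oct_form (0, axis 1 1) (0, axis 6 1) = axis 5 1"
  "oct_form (0, axis 2 1) (0, axis 0 1) = axis 6 1"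
  "oct_form (0, axis 2 1) (0, axis 1 1) = axis 4 1"
  "oct_form (0, axis 2 1) (0, axis 2 1) = 0"
  "oct_form (0, axis 2 1) (0, axis 3 1) = - axis 5 1"
  "oct_form (0, axis 2 1) (0, axis 4 1) = - axis 1 1"
  "oct_form (0, axis 2 1) (0, axis 5 1) = axis 3 1"
  "oct_form (0, axis 2 1) (0, axis 6 1) = - axis 0 1"
  "oct_form (0, axis 3 1) (0, axis 0 1) = - axis 1 1"
  "oct_form (0, axis 3 1) (0, axis 1 1) = axis 0 1"
  "oct_form (0, axis 3 1) (0, axis 2 1) = axis 5 1"
  "oct_form (0, axis 3 1) (0, axis 3 1) = 0"
  "oct_form (0, axis 3 1) (0, axis 4 1) = - axis 6 1"
  "oct_form (0, axis 3 1) (0, axis 5 1) = - axis 2 1"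
  "oct_form (0, axis 3 1) (0, axis 6 1) = axis 4 1"
  "oct_form (0, axis 4 1) (0, axis 0 1) = axis 5 1"
  "oct_form (0, axis 4 1) (0, axis 1 1) = - axis 2 1"
  "oct_form (0, axis 4 1) (0, axis 2 1) = axis 1 1"
  "oct_form (0, axis 4 1) (0, axis 3 1) = axis 6 1"
  "oct_form (0, axis 4 1) (0, axis 4 1) = 0"
  "oct_form (0, axis 4 1) (0, axis 5 1) = - axis 0 1"
  "oct_form (0, axis 4 1) (0, axis 6 1) = - axis 3 1"
  "oct_form (0, axis 5 1) (0, axis 0 1) = - axis 4 1"
  "oct_form (0, axis 5 1) (0, axis 1 1) = axis 6 1"
  "oct_form (0, axis 5 1) (0, axis 2 1) = - axis 3 1"
  "oct_form (0, axis 5 1) (0, axis 3 1) = axis 2 1"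
  "oct_form (0, axis 5 1) (0, axis 4 1) = axis 0 1"
  "oct_form (0, axis 5 1) (0, axis 5 1) = 0"
  "oct_form (0, axis 5 1) (0, axis 6 1) = - axis 1 1"
  "oct_form (0, axis 6 1) (0, axis 0 1) = - axis 2 1"
  "oct_form (0, axis 6 1) (0, axis 1 1) = - axis 5 1"
  "oct_form (0, axis 6 1) (0, axis 2 1) = axis 0 1"
  "oct_form (0, axis 6 1) (0, axis 3 1) = - axis 4 1"
  "oct_form (0, axis 6 1) (0, axis 4 1) = axis 3 1"
  "oct_form (0, axis 6 1) (0, axis 5 1) = axis 1 1"
  "oct_form (0, axis 6 1) (0, axis 6 1) = 0"
  by (simp_all add: vec_eq_iff forall_7 oct_form_nth axis_def mod_7_numerals)

lemma oct_imag_bracket_Basis: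
  "oct_form (0, axis i 1) (0, axis j 1) = 0 \<or> oct_form (0, axis i 1) (0, axis j 1) \<in> Basis
     \<or> - oct_form (0, axis i 1) (0, axis j 1) \<in> Basis"
  using exhaust_7[of i] exhaust_7[of j] by (elim disjE) (simp_all add: oct_imag_table)

lemma oct_basis_cases:
  assumes "(i :: real \<times> (real^7)) \<in> Basis"
  obtains "i = (1, 0)" | k where "i = (0, axis k 1)"
  using assms by (auto simp: Basis_prod_def Basis_real_def dest!: axis_inverse)

lemma oct_in_Basis [simp]:
  "(1, 0) \<in> (Basis :: (real \<times> (real^7)) set)" "(0, axis k 1) \<in> (Basis :: (real \<times> (real^7)) set)"
  by (auto simp: Basis_prod_def)

lemma oct_form_real [simp]:
  "oct_form (1, 0) (0, axis j 1) = axis j 1"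
  "oct_form (0, axis j 1) (1, 0) = - axis j 1"
  "oct_form (1, 0) (1, 0) = 0"
  by (simp_all add: vec_eq_iff oct_form_nth)

text \<open>\<open>oct_cross A B\<close> is the imaginary part of the product of the imaginary octonions A and B.\<close>

definition oct_cross :: "real^7 \<Rightarrow> real^7 \<Rightarrow> real^7" where
  "oct_cross A B = (\<chi> k. (A $ (k-3)) * (B $ (k-2)) - (A $ (k-2)) * (B $ (k-3))
     + ((A $ (k+1)) * (B $ (k+3)) - (A $ (k+3)) * (B $ (k+1)))
     + ((A $ (k+2)) * (B $ (k-1)) - (A $ (k-1)) * (B $ (k+2))))"

text \<open>The second argument is the product a z for imaginary z; by alternativity
  \<open>conj a * (a * z) = |a|\<^sup>2 z\<close>.\<close>

lemma oct_form_left_product: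
  "oct_form (a0, A) (- (A \<bullet> z), a0 *\<^sub>R z + oct_cross A z) = (a0 * a0 + A \<bullet> A) *\<^sub>R z"
  unfolding vec_eq_iff forall_7
  by (simp add: oct_form_nth oct_cross_def inner_vec_def sum_7 mod_7_numerals) (simp add: algebra_simps)

lemma oct_bilinear: "bilinear oct_form"
  unfolding bilinear_def linear_iff by (auto simp: vec_eq_iff oct_form_nth algebra_simps)

lemma oct_skew: "oct_form a b = - oct_form b a"
  by (simp add: vec_eq_iff oct_form_nth algebra_simps)

lemma oct_ad_surj:
  assumes "(a :: real \<times> (real^7)) \<noteq> 0"
  shows "\<exists>b. oct_form a b = z"
proof -
  obtain a0 A where a: "a = (a0, A)" by fastforce
  define N where "N = a0 * a0 + A \<bullet> A"
  have "N \<noteq> 0" using assms by (simp add: a N_def add_nonneg_eq_0_iff zero_prod_def)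
  define b where "b = (- (A \<bullet> z), a0 *\<^sub>R z + oct_cross A z)"
  have "oct_form a ((1/N) *\<^sub>R b) = (1/N) *\<^sub>R oct_form a b"
    by (rule bilinear_rmul[OF oct_bilinear])
  also have "oct_form a b = N *\<^sub>R z"
    unfolding a b_def N_def by (rule oct_form_left_product)
  finally have "oct_form a ((1/N) *\<^sub>R b) = z" using \<open>N \<noteq> 0\<close> by simp
  then show ?thesis by blast
qed

lemma oct_bracket_Basis:
  assumes "(i :: real \<times> (real^7)) \<in> Basis" "j \<in> Basis"
  shows "oct_form i j = 0 \<or> oct_form i j \<in> Basis \<or> - oct_form i j \<in> Basis"
  by (cases rule: oct_basis_cases[OF assms(1)]; cases rule: oct_basis_cases[OF assms(2)])
    (simp_all add: oct_imag_bracket_Basis axis_in_Basis_iff)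

lemma oct_Basis_centralizer:
  assumes i: "(i :: real \<times> (real^7)) \<in> Basis"
    and w: "\<forall>j\<in>Basis. oct_form i j = 0 \<longrightarrow> oct_form w j = 0"
  shows "\<exists>c. w = c *\<^sub>R i"
proof -
  obtain w0 W where w0W: "w = (w0, W)" by fastforce
  have "oct_form i i = 0" by (simp add: vec_eq_iff oct_form_nth)
  then have "oct_form w i = 0" using w i by blast
  from i show ?thesis
  proof (cases rule: oct_basis_cases)
    case 1
    then have "W = 0" using \<open>oct_form w i = 0\<close> by (simp add: w0W vec_eq_iff oct_form_nth)
    then show ?thesis by (auto simp: 1 w0W)
  next
    case (2 k)
    then have "w0 = 0 \<and> W = W $ k *\<^sub>R axis k 1"
      using \<open>oct_form w i = 0\<close> exhaust_7[of k]
      by (elim disjE) (simp_all add: w0W vec_eq_iff forall_7 oct_form_nth axis_def mod_7_numerals)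
    then show ?thesis by (auto simp: 2 w0W)
  qed
qed

lemma oct_Basis_onto: "\<exists>i\<in>Basis. \<forall>k\<in>Basis. \<exists>j\<in>(Basis :: (real \<times> (real^7)) set). oct_form i j = k"
proof -
  have "\<exists>j\<in>Basis. oct_form (1, 0) j = k" if "k \<in> Basis" for k :: "real^7"
    using that oct_in_Basis(2) oct_form_real(1) axis_inverse by metis
  then show ?thesis using oct_in_Basis(1) by blast
qed

lemma basis_bracket_oct: "basis_bracket oct_form"
  by unfold_locales
    (fact oct_bilinear oct_skew oct_ad_surj oct_bracket_Basis oct_Basis_onto oct_Basis_centralizer)+

theorem corollary6p2:
  shows "(\<forall>F :: ((real^'n) \<times> (real^'n)) \<times> real \<Rightarrow> ((real^'n) \<times> (real^'n)) \<times> real.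
            nhom heis_form F \<and> (\<exists>z\<in>ncenter heis_form. F z \<noteq> nunit)
              \<longrightarrow> cor_concl heis_form F)
       \<and> (\<forall>F :: ((real^'m) \<times> (real^'m) \<times> (real^'m) \<times> (real^'m)) \<times> (real \<times> real \<times> real)
                \<Rightarrow> ((real^'m) \<times> (real^'m) \<times> (real^'m) \<times> (real^'m)) \<times> (real \<times> real \<times> real).
            nhom quat_form F \<and> inj_on F (ncenter quat_form)
              \<longrightarrow> cor_concl quat_form F)
       \<and> (\<forall>F :: (real \<times> (real^7)) \<times> (real^7) \<Rightarrow> (real \<times> (real^7)) \<times> (real^7).
            nhom oct_form F \<and> inj_on F (ncenter oct_form)
              \<longrightarrow> cor_concl oct_form F)"
  using heis_cor_concl_if_nontrivial_on_center
    basis_bracket.cor_concl_if_inj_on_ncenter[OF basis_bracket_quat]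
    basis_bracket.cor_concl_if_inj_on_ncenter[OF basis_bracket_oct]
  by blast

end
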